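(* Let $d$ be a circular design with $t$ treatments and $b$ blocks of length $k$. (i) If $l^*$ maximizes $c(l)$ over all sequences $l$ of length $k$ with entries in $\{1,\dots,t\}$, then under model $(\mathcal{M}1)$, $\mathrm{tr}(C_d[\phi])\le b\,c(l^* )$. (ii) If $l^*$ maximizes $\tilde c(l)$ over all such sequences, then under model $(\mathcal{M}2)$, $\mathrm{tr}(C_d[\psi])\le b\,\tilde c(l^* )$.
   Context: Designs: $t$ treatments, $b$ linear blocks; block $i$ has inner plots $j=1,\dots,k$ and border plots $j=0,k+1$; $d(i,j)$ is the treatment on plot $(i,j)$, and circularity means $d(i,0)=d(i,k)$, $d(i,k+1)=d(i,1)$. Responses $Y_{i,j}$ ($1\le i\le b$, $1\le j\le k$) are uncorrelated with common variance. Model $(\mathcal{M}1)$: $\mathbb{E}(Y)=B\beta+T_d\tau+L_d\lambda$; model $(\mathcal{M}2)$: $\mathbb{E}(Y)=B\beta+T_d\tau+L_d\lambda+R_d\rho$, where $B$ is the block incidence matrix and $T_d,L_d,R_d$ ($bk\times t$) have in row $(i,j)$ a single $1$ in column $d(i,j)$, $d(i,j-1)$, $d(i,j+1)$ respectively. Total effects: $\phi=\tau+\lambda$ in $(\mathcal{M}1)$, $\psi=\tau+\lambda+\rho$ in $(\mathcal{M}2)$; these equal $K'\alpha$ with $\alpha=(\tau',\lambda')'$, $K=\mathbf{1}_2\otimes I_t$, $A=(T_d\mid L_d)$, respectively $\alpha=(\tau',\lambda',\rho')'$, $K=\mathbf 1_3\otimes I_t$, $A=(T_d\mid L_d\mid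 R_d)$. Information matrix: with $A^+$ the Moore–Penrose inverse, $\mathrm{pr}_{(X)}=X(X'X)^+X'$, $\mathrm{pr}^\perp_{(X)}=I-\mathrm{pr}_{(X)}$, $M=I-K(K'K)^+K'$, $X_1=AK(K'K)^+$, $X_2=(AM\mid B)$, the information matrix for $K'\alpha$ is $X_1'\mathrm{pr}^\perp_{(X_2)}X_1$; this gives $C_d[\phi]$ and $C_d[\psi]$. For a sequence $l=(l_1,\dots,l_k)$ with entries in $\{1,\dots,t\}$, put $l_0=l_k$, $l_{k+1}=l_1$; $n_i$ = number of occurrences of $i$ in $l$; $m_i$ = number of $j\in\{1,\dots,k\}$ with $l_{j-1}=l_j=i$; $p_i$ = number of $j\in\{1,\dots,k\}$ with $l_{j-1}=l_{j+1}=i$. Define $c(l)=\frac12\big(k-\frac2k\sum_i n_i^2+\sum_i m_i\big)$ and $\tilde c(l)=\frac19\big(3k-\frac9k\sum_i n_i^2+4\sum_i m_i+2\sum_i p_i\big)$. *)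

theory Defs
  imports "Jordan_Normal_Form.Matrix"
begin

definition mtrace :: "real mat \<Rightarrow> real" where
  "mtrace A = (\<Sum>i<dim_row A. A $$ (i,i))"

text \<open>Moore-Penrose inverse, defined by the four Penrose conditions (it exists and is unique).\<close>
definition mp_inverse :: "real mat \<Rightarrow> real mat" where
  "mp_inverse A = (THE G. G \<in> carrier_mat (dim_col A) (dim_row A) \<and>
      A * G * A = A \<and> G * A * G = G \<and>
      transpose_mat (A * G) = A * G \<and> transpose_mat (G * A) = G * A)"

definition hcat :: "real mat \<Rightarrow> real mat \<Rightarrow> real mat" where
  "hcat X Y = mat (dim_row X) (dim_col X + dim_col Y)
     (\<lambda>(i,j). if j < dim_col X then X $$ (i,j) else Y $$ (i, j - dim_col X))"

definition proj :: "real mat \<Rightarrow> real mat" where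
  "proj X = X * mp_inverse (transpose_mat X * X) * transpose_mat X"

definition proj_perp :: "real mat \<Rightarrow> real mat" where
  "proj_perp X = 1\<^sub>m (dim_row X) - proj X"

text \<open>Information matrix for K'alpha in the model E(Y) = B beta + A alpha.\<close>
definition info_mat :: "real mat \<Rightarrow> real mat \<Rightarrow> real mat \<Rightarrow> real mat" where
  "info_mat A B K =
     (let KK = mp_inverse (transpose_mat K * K);
          M = 1\<^sub>m (dim_row K) - K * KK * transpose_mat K;
          X1 = A * K * KK;
          X2 = hcat (A * M) B
      in transpose_mat X1 * proj_perp X2 * X1)"

text \<open>Blocks i \<in> {0..<b}, inner plots j \<in> {0..<k}, treatments {0..<t}.
  Observation (i,j) is row i*k+j. Circularity: left neighbour of plot j is
  plot (j+k-1) mod k, right neighbour is (j+1) mod k.\<close>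

definition is_design :: "nat \<Rightarrow> nat \<Rightarrow> nat \<Rightarrow> (nat \<Rightarrow> nat \<Rightarrow> nat) \<Rightarrow> bool" where
  "is_design t b k d \<longleftrightarrow> (\<forall>i<b. \<forall>j<k. d i j < t)"

definition block_mat :: "nat \<Rightarrow> nat \<Rightarrow> real mat" where
  "block_mat b k = mat (b*k) b (\<lambda>(r,c). if r div k = c then 1 else 0)"

definition T_mat :: "nat \<Rightarrow> nat \<Rightarrow> nat \<Rightarrow> (nat \<Rightarrow> nat \<Rightarrow> nat) \<Rightarrow> real mat" where
  "T_mat t b k d = mat (b*k) t (\<lambda>(r,c). if d (r div k) (r mod k) = c then 1 else 0)"

definition L_mat :: "nat \<Rightarrow> nat \<Rightarrow> nat \<Rightarrow> (nat \<Rightarrow> nat \<Rightarrow> nat) \<Rightarrow> real mat" where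
  "L_mat t b k d = mat (b*k) t
     (\<lambda>(r,c). if d (r div k) ((r mod k + k - 1) mod k) = c then 1 else 0)"

definition R_mat :: "nat \<Rightarrow> nat \<Rightarrow> nat \<Rightarrow> (nat \<Rightarrow> nat \<Rightarrow> nat) \<Rightarrow> real mat" where
  "R_mat t b k d = mat (b*k) t
     (\<lambda>(r,c). if d (r div k) ((r mod k + 1) mod k) = c then 1 else 0)"

text \<open>K = 1_m \<otimes> I_t.\<close>
definition K_mat :: "nat \<Rightarrow> nat \<Rightarrow> real mat" where
  "K_mat m t = mat (m*t) t (\<lambda>(r,c). if r mod t = c then 1 else 0)"

definition C_phi :: "nat \<Rightarrow> nat \<Rightarrow> nat \<Rightarrow> (nat \<Rightarrow> nat \<Rightarrow> nat) \<Rightarrow> real mat" where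
  "C_phi t b k d = info_mat (hcat (T_mat t b k d) (L_mat t b k d)) (block_mat b k) (K_mat 2 t)"

definition C_psi :: "nat \<Rightarrow> nat \<Rightarrow> nat \<Rightarrow> (nat \<Rightarrow> nat \<Rightarrow> nat) \<Rightarrow> real mat" where
  "C_psi t b k d = info_mat (hcat (hcat (T_mat t b k d) (L_mat t b k d)) (R_mat t b k d))
      (block_mat b k) (K_mat 3 t)"

text \<open>A sequence l = (l_1..l_k) is a list of length k (0-indexed), entries in {0..<t};
  l_0 = l_k and l_{k+1} = l_1, i.e. cyclic neighbours.\<close>

definition is_seq :: "nat \<Rightarrow> nat \<Rightarrow> nat list \<Rightarrow> bool" where
  "is_seq t k l \<longleftrightarrow> length l = k \<and> set l \<subseteq> {..<t}"

definition seq_n :: "nat list \<Rightarrow> nat \<Rightarrow> nat" where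
  "seq_n l i = card {j. j < length l \<and> l ! j = i}"

definition seq_m :: "nat list \<Rightarrow> nat \<Rightarrow> nat" where
  "seq_m l i = card {j. j < length l \<and>
      l ! ((j + length l - 1) mod length l) = i \<and> l ! j = i}"

definition seq_p :: "nat list \<Rightarrow> nat \<Rightarrow> nat" where
  "seq_p l i = card {j. j < length l \<and>
      l ! ((j + length l - 1) mod length l) = i \<and> l ! ((j + 1) mod length l) = i}"

definition c_fun :: "nat \<Rightarrow> nat list \<Rightarrow> real" where
  "c_fun t l = (let k = real (length l) in
     (1/2) * (k - (2/k) * (\<Sum>i<t. real (seq_n l i)^2) + (\<Sum>i<t. real (seq_m l i))))"

definition ctilde_fun :: "nat \<Rightarrow> nat list \<Rightarrow> real" where
  "ctilde_fun t l = (let k = real (length l) in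
     (1/9) * (3*k - (9/k) * (\<Sum>i<t. real (seq_n l i)^2)
              + 4 * (\<Sum>i<t. real (seq_m l i)) + 2 * (\<Sum>i<t. real (seq_p l i))))"

end

theory Submission
  imports Defs
begin

(* Write X1 = A K (K'K)^+ and X2 = (A M | B), so that C = X1' pr_perp(X2) X1.  The column space of
   X2 contains that of the block incidence matrix B, so pr_(X2) - pr_(B) is again an orthogonal
   projector and tr C <= tr (X1' pr_perp(B) X1).  As B'B = k I, pr_(B) = B B' / k, and this trace
   is the sum over the blocks of the within-block sums of squares of the rows of X1.  The row of
   plot (i,j) is the mean of the indicator vectors of the treatments on the plot and on its left
   (and right) neighbour; for a block with treatment sequence l its within-block sum of squares
   is exactly c(l) (resp. c~(l)), which is at most the value at a maximising sequence.
   The one ingredient beyond matrix algebra is the existence of the Moore-Penrose inverse of a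
   symmetric matrix, obtained from an orthogonal projector onto its column space that is built
   column by column (Gram-Schmidt). *)

section \<open>Matrix algebra\<close>

(* Variants of library laws with side conditions on dimensions instead of carriers, so that the
   simplifier can discharge them. *)

lemma transpose_mult'[simp]:
  "dim_col (A :: 'a :: comm_semiring_0 mat) = dim_row B \<Longrightarrow> transpose_mat (A * B) = transpose_mat B * transpose_mat A"
  by (rule transpose_mult[of A "dim_row A" "dim_col A" B "dim_col B"]) auto

lemma assoc_mult_mat'[simp]:
  "dim_col (A :: 'a :: semiring_0 mat) = dim_row B \<Longrightarrow> dim_col B = dim_row C \<Longrightarrow> A * B * C = A * (B * C)"
  by (rule assoc_mult_mat[of A "dim_row A" "dim_col A" B "dim_col B" C "dim_col C"]) auto

lemma mult_add_distrib_mat':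
  "dim_col (A :: 'a :: semiring_0 mat) = dim_row B \<Longrightarrow> dim_row B = dim_row C \<Longrightarrow> dim_col B = dim_col C \<Longrightarrow>
    A * (B + C) = A * B + A * C"
  by (rule mult_add_distrib_mat[of A "dim_row A" "dim_col A" B "dim_col B"]) auto

lemma add_mult_distrib_mat':
  "dim_row (A :: 'a :: semiring_0 mat) = dim_row B \<Longrightarrow> dim_col A = dim_col B \<Longrightarrow> dim_col A = dim_row C \<Longrightarrow>
    (A + B) * C = A * C + B * C"
  by (rule add_mult_distrib_mat[of A "dim_row A" "dim_col A" B C "dim_col C"]) auto

lemma mult_minus_distrib_mat':
  "dim_col (A :: 'a :: ring mat) = dim_row B \<Longrightarrow> dim_row B = dim_row C \<Longrightarrow> dim_col B = dim_col C \<Longrightarrow>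
    A * (B - C) = A * B - A * C"
  by (rule mult_minus_distrib_mat[of A "dim_row A" "dim_col A" B "dim_col B"]) auto

lemma minus_mult_distrib_mat':
  "dim_row (A :: 'a :: ring mat) = dim_row B \<Longrightarrow> dim_col A = dim_col B \<Longrightarrow> dim_col A = dim_row C \<Longrightarrow>
    (A - B) * C = A * C - B * C"
  by (rule minus_mult_distrib_mat[of A "dim_row A" "dim_col A" B C "dim_col C"]) auto

lemmas mat_distrib_simps = mult_add_distrib_mat' add_mult_distrib_mat' mult_minus_distrib_mat' minus_mult_distrib_mat'

lemma mult_smult_distrib'[simp]:
  "dim_col (A :: 'a :: comm_semiring_0 mat) = dim_row B \<Longrightarrow> A * (a \<cdot>\<^sub>m B) = a \<cdot>\<^sub>m (A * B)"
  by (rule eq_matI) auto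

lemma mult_smult_assoc_mat'[simp]:
  "dim_col (A :: 'a :: comm_semiring_0 mat) = dim_row B \<Longrightarrow> (a \<cdot>\<^sub>m A) * B = a \<cdot>\<^sub>m (A * B)"
  by (rule eq_matI) auto

lemma transpose_minus_mat'[simp]:
  "dim_row A = dim_row B \<Longrightarrow> dim_col A = dim_col B \<Longrightarrow> transpose_mat (A - B) = transpose_mat A - transpose_mat B"
  by (rule eq_matI) auto

lemma transpose_smult_mat[simp]: "transpose_mat (a \<cdot>\<^sub>m A) = a \<cdot>\<^sub>m transpose_mat A"
  by (rule eq_matI) auto

lemma smult_smult_mat[simp]: "a \<cdot>\<^sub>m (b \<cdot>\<^sub>m A) = (a * b :: 'a :: semigroup_mult) \<cdot>\<^sub>m A"
  by (rule eq_matI) (auto simp: mult.assoc)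

lemma one_smult_mat[simp]: "(1 :: 'a :: monoid_mult) \<cdot>\<^sub>m A = A"
  by (rule eq_matI) auto

lemma eq_of_minus_eq_0_mat:
  fixes A B :: "'a :: ab_group_add mat"
  assumes "A \<in> carrier_mat m n" "B \<in> carrier_mat m n" "A - B = 0\<^sub>m m n"
  shows "A = B"
proof (rule eq_matI)
  fix i j assume "i < dim_row B" "j < dim_col B"
  then have "(A - B) $$ (i, j) = 0"
    using assms by simp
  then show "A $$ (i, j) = B $$ (i, j)"
    using assms(1,2) \<open>i < dim_row B\<close> \<open>j < dim_col B\<close> by simp
qed (use assms in auto)

lemma hcat_dims[simp]: "dim_row (hcat X Y) = dim_row X" "dim_col (hcat X Y) = dim_col X + dim_col Y"
  by (simp_all add: hcat_def)

lemma index_hcat: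
  "i < dim_row X \<Longrightarrow> j < dim_col X + dim_col Y \<Longrightarrow>
    hcat X Y $$ (i, j) = (if j < dim_col X then X $$ (i, j) else Y $$ (i, j - dim_col X))"
  by (simp add: hcat_def)

lemma hcat_carrier: "Y \<in> carrier_mat n p \<Longrightarrow> B \<in> carrier_mat n r \<Longrightarrow> hcat Y B \<in> carrier_mat n (p + r)"
  by (intro carrier_matI) auto

lemma mtrace_add:
  "dim_row A = dim_row B \<Longrightarrow> dim_col B = dim_row B \<Longrightarrow> mtrace (A + B) = mtrace A + mtrace B"
  by (auto simp: mtrace_def sum.distrib)

lemma mtrace_transpose_mult_self:
  "mtrace (transpose_mat (A :: real mat) * A) = (\<Sum>j<dim_col A. \<Sum>i<dim_row A. (A $$ (i, j))\<^sup>2)"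
  by (auto simp: mtrace_def scalar_prod_def power2_eq_square lessThan_atLeast0 intro!: sum.cong)

lemma mtrace_transpose_mult_self_nonneg: "mtrace (transpose_mat A * A) \<ge> 0"
  by (auto simp: mtrace_transpose_mult_self intro!: sum_nonneg)

lemma mtrace_minus:
  "dim_row A = dim_row B \<Longrightarrow> dim_col B = dim_row B \<Longrightarrow> mtrace (A - B) = mtrace A - mtrace B"
  by (auto simp: mtrace_def sum_subtractf)

lemma mtrace_smult: "dim_col A = dim_row A \<Longrightarrow> mtrace (a \<cdot>\<^sub>m A) = a * mtrace A"
  by (auto simp: mtrace_def sum_distrib_left intro!: sum.cong)

section \<open>Moore--Penrose inverses and orthogonal projectors\<close>

lemma penrose_unique:
  fixes A G1 G2 :: "'a :: comm_semiring_0 mat"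
  assumes A: "A \<in> carrier_mat m n" and G1: "G1 \<in> carrier_mat n m" and G2: "G2 \<in> carrier_mat n m"
    and a1: "A * G1 * A = A" and b1: "G1 * A * G1 = G1"
    and c1: "transpose_mat (A * G1) = A * G1" and d1: "transpose_mat (G1 * A) = G1 * A"
    and a2: "A * G2 * A = A" and b2: "G2 * A * G2 = G2"
    and c2: "transpose_mat (A * G2) = A * G2" and d2: "transpose_mat (G2 * A) = G2 * A"
  shows "G1 = G2"
proof -
  note dims = carrier_matD[OF A] carrier_matD[OF G1] carrier_matD[OF G2]
  have "G1 = G1 * transpose_mat (A * G1)" using b1 c1 dims by simp
  also have "\<dots> = G1 * (transpose_mat G1 * transpose_mat (A * G2 * A))" using a2 dims by simp
  also have "\<dots> = G1 * (transpose_mat (A * G1) * transpose_mat (A * G2))" using dims by simp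
  also have "\<dots> = (G1 * A * G1) * A * G2" using c1 c2 dims by simp
  finally have left: "G1 = G1 * A * G2" using b1 by simp
  have "G2 = transpose_mat (G2 * A) * G2" using b2 d2 dims by simp
  also have "\<dots> = (transpose_mat (A * G1 * A) * transpose_mat G2) * G2" using a1 dims by simp
  also have "\<dots> = (transpose_mat (G1 * A) * transpose_mat (G2 * A)) * G2" using dims by simp
  also have "\<dots> = G1 * A * (G2 * A * G2)" using d1 d2 dims by simp
  finally show ?thesis using left b2 by simp
qed

lemma mp_inverse_eqI:
  fixes A H :: "real mat"
  assumes A: "A \<in> carrier_mat m n" and H: "H \<in> carrier_mat n m"
    and "A * H * A = A" "H * A * H = H"
    and "transpose_mat (A * H) = A * H" "transpose_mat (H * A) = H * A"
  shows "mp_inverse A = H"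
  unfolding mp_inverse_def using carrier_matD[OF A] assms
  by (intro the_equality) (auto intro: penrose_unique[OF A _ H])

lemma diag_transpose_mult_self:
  "j < dim_col (A :: real mat) \<Longrightarrow> (transpose_mat A * A) $$ (j, j) = (\<Sum>i<dim_row A. (A $$ (i, j))\<^sup>2)"
  by (auto simp: scalar_prod_def power2_eq_square lessThan_atLeast0 intro!: sum.cong)

lemma transpose_mult_self_eq_0:
  assumes A: "(A :: real mat) \<in> carrier_mat m n" and AA: "transpose_mat A * A = 0\<^sub>m n n"
  shows "A = 0\<^sub>m m n"
proof (rule eq_matI)
  fix i j assume ij: "i < dim_row (0\<^sub>m m n)" "j < dim_col (0\<^sub>m m n)"
  have "(\<Sum>i<m. (A $$ (i, j))\<^sup>2) = 0"
    using diag_transpose_mult_self[of j A] AA A ij by auto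
  then show "A $$ (i, j) = 0\<^sub>m m n $$ (i, j)"
    using ij by (simp add: sum_nonneg_eq_0_iff)
qed (use A in auto)

definition unit_col :: "nat \<Rightarrow> nat \<Rightarrow> real mat" where
  "unit_col n j = mat n 1 (\<lambda>(i, _). of_bool (i = j))"

lemma unit_col_dims[simp]: "dim_row (unit_col n j) = n" "dim_col (unit_col n j) = 1"
  by (simp_all add: unit_col_def)

lemma unit_col_carrier: "unit_col n j \<in> carrier_mat n 1"
  by (simp add: carrier_matI)

lemma index_mult_unit_col:
  assumes "C \<in> carrier_mat m n" "i < m" "j < n"
  shows "(C * unit_col n j) $$ (i, 0) = C $$ (i, j)"
proof -
  have "(C * unit_col n j) $$ (i, 0) = (\<Sum>u<n. C $$ (i, u) * of_bool (u = j))"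
    using assms by (auto simp: unit_col_def scalar_prod_def lessThan_atLeast0 intro!: sum.cong)
  then show ?thesis using assms(3) by simp
qed

lemma mat_eq_by_unit_cols:
  assumes "A \<in> carrier_mat m n" "B \<in> carrier_mat m n"
    and "\<And>j. j < n \<Longrightarrow> A * unit_col n j = B * unit_col n j"
  shows "A = B"
  using assms index_mult_unit_col[OF assms(1)] index_mult_unit_col[OF assms(2)]
  by (intro eq_matI) (metis carrier_matD)+

lemma mult_one_by_one_mat:
  assumes "dim_col (c :: real mat) = 1" "u \<in> carrier_mat 1 1"
  shows "c * u = u $$ (0, 0) \<cdot>\<^sub>m c"
  using assms by (intro eq_matI) (auto simp: scalar_prod_def)

lemma projector_residual:
  fixes P x :: "'a :: ring mat"
  assumes P: "P \<in> carrier_mat m m" and x: "x \<in> carrier_mat m n" and P_idem: "P * P = P"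
  shows "P * (P * x) = P * x" and "P * (x - P * x) = 0\<^sub>m m n" and "(x - P * x) + P * x = x"
proof -
  have "P * (P * x) = (P * P) * x"
    using P x by simp
  then show "P * (P * x) = P * x"
    using P_idem by simp
  then show "P * (x - P * x) = 0\<^sub>m m n"
    using P x by (simp add: mult_minus_distrib_mat')
  show "(x - P * x) + P * x = x"
    using P x by (intro eq_matI) auto
qed

lemma projector_rank_one_update:
  fixes P c :: "real mat"
  assumes P: "P \<in> carrier_mat m m" and c: "c \<in> carrier_mat m 1"
    and P_sym: "transpose_mat P = P" and P_idem: "P * P = P" and Pc: "P * c = 0\<^sub>m m 1"
    and s: "(transpose_mat c * c) $$ (0, 0) = s" "s \<noteq> 0"
  defines "Q \<equiv> P + (1/s) \<cdot>\<^sub>m (c * transpose_mat c)"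
  shows "transpose_mat Q = Q" and "Q * Q = Q" and "Q * c = c"
    and "\<And>y. y \<in> carrier_mat m 1 \<Longrightarrow> P * y = y \<Longrightarrow> Q * y = y"
proof -
  have "transpose_mat c * P = transpose_mat (P * c)"
    using P c P_sym by simp
  then have cP: "transpose_mat c * P = 0\<^sub>m 1 m"
    using Pc by simp
  have cc: "c * (transpose_mat c * c) = s \<cdot>\<^sub>m c"
    using c s by (subst mult_one_by_one_mat) auto
  have Q: "Q \<in> carrier_mat m m"
    using P c by (simp add: Q_def)
  show "transpose_mat Q = Q"
    unfolding Q_def using P c P_sym by (simp add: transpose_add)
  have QP: "Q * P = P"
    unfolding Q_def using P c P_idem cP by (simp add: mat_distrib_simps)
  show Qc: "Q * c = c"
    unfolding Q_def using P c Pc cc s(2) by (simp add: mat_distrib_simps)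
  have "Q * (c * transpose_mat c) = (Q * c) * transpose_mat c"
    unfolding Q_def using P c by simp
  then have "Q * (c * transpose_mat c) = c * transpose_mat c"
    using Qc by simp
  then show "Q * Q = Q"
    unfolding Q_def using P c QP[unfolded Q_def] by (simp add: mat_distrib_simps)
  fix y assume y: "y \<in> carrier_mat m 1" and Py: "P * y = y"
  have "Q * y = (Q * P) * y"
    using y Py Q P by simp
  then show "Q * y = y"
    using QP Py by simp
qed

(* Gram-Schmidt step: the orthogonal projector X W onto a subspace of the column space of X is
   enlarged by the normalised component of X F orthogonal to its range. *)
lemma projector_extend:
  fixes X W F :: "real mat"
  assumes X: "X \<in> carrier_mat m N" and W: "W \<in> carrier_mat N m" and F: "F \<in> carrier_mat N 1"
    and sym: "transpose_mat (X * W) = X * W" and idem: "X * W * (X * W) = X * W"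
  obtains W' where "W' \<in> carrier_mat N m" "transpose_mat (X * W') = X * W'" "X * W' * (X * W') = X * W'"
    "X * W' * (X * F) = X * F" "\<And>y. y \<in> carrier_mat m 1 \<Longrightarrow> X * W * y = y \<Longrightarrow> X * W' * y = y"
proof -
  define P where "P = X * W"
  define x where "x = X * F"
  define c where "c = x - P * x"
  define s where "s = (transpose_mat c * c) $$ (0, 0)"
  have P: "P \<in> carrier_mat m m" and x: "x \<in> carrier_mat m 1" and c: "c \<in> carrier_mat m 1"
    using X W F by (auto simp: P_def x_def c_def)
  have P_sym: "transpose_mat P = P" and P_idem: "P * P = P"
    using sym idem by (simp_all add: P_def)
  note residual = projector_residual[OF P x P_idem, folded c_def]
  show ?thesis
  proof (cases "s = 0")
    case True
    then have "transpose_mat c * c = 0\<^sub>m 1 1"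
      using c by (intro eq_matI) (auto simp: s_def)
    then have "P * x = x"
      using residual(3) transpose_mult_self_eq_0[OF c] P x by simp
    then show ?thesis
      by (intro that[OF W sym idem]) (simp_all add: P_def x_def)
  next
    case False
    define Q where "Q = P + (1/s) \<cdot>\<^sub>m (c * transpose_mat c)"
    note Q = projector_rank_one_update[OF P c P_sym P_idem residual(2) s_def[symmetric] False, folded Q_def]
    define W' where "W' = W + (1/s) \<cdot>\<^sub>m ((F - W * x) * transpose_mat c)"
    have W': "W' \<in> carrier_mat N m"
      using W F x c by (auto simp: W'_def intro: minus_carrier_mat)
    have "X * (F - W * x) = c"
      using X W F x by (simp add: mat_distrib_simps c_def x_def P_def)
    moreover have "X * ((F - W * x) * transpose_mat c) = X * (F - W * x) * transpose_mat c"
      using X W F x c by simp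
    ultimately have "X * ((F - W * x) * transpose_mat c) = c * transpose_mat c"
      by simp
    then have XW': "X * W' = Q"
      using X W F x c by (simp add: W'_def Q_def P_def mult_add_distrib_mat')
    have "Q * x = Q * (c + P * x)"
      using residual(3) by simp
    also have "\<dots> = Q * c + Q * (P * x)"
      using P c x by (simp add: Q_def mult_add_distrib_mat')
    finally have "Q * x = x"
      using Q(3) Q(4)[of "P * x"] P x residual by simp
    then show ?thesis
      using Q unfolding P_def x_def by (intro that[OF W']) (simp_all only: XW')
  qed
qed

lemma ex_projector_fixing_unit_cols:
  fixes X :: "real mat"
  assumes X: "X \<in> carrier_mat m N"
  shows "\<exists>W \<in> carrier_mat N m. transpose_mat (X * W) = X * W \<and> X * W * (X * W) = X * W \<and>
           (\<forall>j<n. X * W * (X * unit_col N j) = X * unit_col N j)"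
proof (induction n)
  case 0
  show ?case using X by (intro bexI[of _ "0\<^sub>m N m"]) auto
next
  case (Suc n)
  then obtain W where W: "W \<in> carrier_mat N m" and sym: "transpose_mat (X * W) = X * W"
    and idem: "X * W * (X * W) = X * W"
    and fixed: "\<forall>j<n. X * W * (X * unit_col N j) = X * unit_col N j"
    by blast
  obtain W' where "W' \<in> carrier_mat N m" "transpose_mat (X * W') = X * W'" "X * W' * (X * W') = X * W'"
    "X * W' * (X * unit_col N n) = X * unit_col N n"
    "\<And>y. y \<in> carrier_mat m 1 \<Longrightarrow> X * W * y = y \<Longrightarrow> X * W' * y = y"
    by (rule projector_extend[OF X W unit_col_carrier[of N n] sym idem]) blast
  moreover have "X * unit_col N j \<in> carrier_mat m 1" for j
    using X by (intro carrier_matI) auto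
  ultimately show ?case
    using fixed by (auto simp only: less_Suc_eq intro!: bexI[of _ W'])
qed

lemma ex_orthogonal_projector:
  fixes X :: "real mat"
  assumes X: "X \<in> carrier_mat m N"
  obtains W where "W \<in> carrier_mat N m" "transpose_mat (X * W) = X * W"
    "X * W * (X * W) = X * W" "X * W * X = X"
proof -
  obtain W where W: "W \<in> carrier_mat N m"
    and props: "transpose_mat (X * W) = X * W" "X * W * (X * W) = X * W"
    and fixed: "\<forall>j<N. X * W * (X * unit_col N j) = X * unit_col N j"
    using ex_projector_fixing_unit_cols[OF X] by blast
  have "X * W * X = X"
  proof (rule mat_eq_by_unit_cols[of _ m N])
    fix j assume "j < N"
    have "X * W * X * unit_col N j = X * W * (X * unit_col N j)"
      using X W by simp
    then show "X * W * X * unit_col N j = X * unit_col N j"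
      using fixed \<open>j < N\<close> by simp
  qed (use X W in auto)
  then show ?thesis using that W props by blast
qed

lemma mp_inverse_symmetric:
  fixes G :: "real mat"
  assumes G: "G \<in> carrier_mat n n" and G_sym: "transpose_mat G = G"
  shows "mp_inverse G \<in> carrier_mat n n" and "G * mp_inverse G * G = G"
    and "transpose_mat (mp_inverse G) = mp_inverse G"
proof -
  obtain W where W: "W \<in> carrier_mat n n" and P_sym: "transpose_mat (G * W) = G * W"
    and P_idem: "G * W * (G * W) = G * W" and PG: "G * W * G = G"
    using ex_orthogonal_projector[OF G] by blast
  define P where "P = G * W"
  define H where "H = transpose_mat W * G * W"
  have P: "P \<in> carrier_mat n n" and H: "H \<in> carrier_mat n n"
    using G W by (auto simp: P_def H_def)
  have P_sym: "transpose_mat P = P" and P_idem: "P * P = P" and PG: "P * G = G"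
    using P_sym P_idem PG by (simp_all add: P_def)
  have WG: "transpose_mat W * G = P"
    using P_sym G W G_sym by (simp add: P_def)
  have "transpose_mat (P * G) = G * P"
    using G P P_sym G_sym by simp
  then have GP: "G * P = G"
    using PG G_sym by simp
  have H_eq: "H = P * W"
    using G W WG by (simp add: H_def)
  have "G * H = (G * P) * W"
    using G P W by (simp add: H_eq)
  then have GH: "G * H = P"
    using GP by (simp add: P_def)
  have "H * G = transpose_mat W * (G * W * G)"
    using G W by (simp add: H_def)
  then have HG: "H * G = P"
    using PG WG by (simp add: P_def)
  have "H * G * H = P * (P * W)"
    unfolding HG by (simp add: H_eq)
  also have "\<dots> = (P * P) * W"
    using P W by simp
  finally have HGH: "H * G * H = H"
    using P_idem by (simp add: H_eq)
  have H_sym: "transpose_mat H = H"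
    using G W G_sym by (simp add: H_def)
  have "mp_inverse G = H"
    using G H PG HGH P_sym by (intro mp_inverse_eqI) (simp_all add: GH HG)
  then show "mp_inverse G \<in> carrier_mat n n" "G * mp_inverse G * G = G"
    "transpose_mat (mp_inverse G) = mp_inverse G"
    using H GH PG H_sym by simp_all
qed

lemma proj_carrier: "X \<in> carrier_mat n q \<Longrightarrow> proj X \<in> carrier_mat n n"
  unfolding proj_def by (auto intro!: carrier_matI)

lemma mult_ginverse_gram:
  fixes X H :: "real mat"
  assumes X: "X \<in> carrier_mat n q" and H: "H \<in> carrier_mat q q" and H_sym: "transpose_mat H = H"
    and G: "transpose_mat X * X * H * (transpose_mat X * X) = transpose_mat X * X"
  shows "X * (H * (transpose_mat X * X)) = X"
proof -
  define E where "E = X * (H * (transpose_mat X * X)) - X"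
  have E: "E \<in> carrier_mat n q"
    using X H by (auto simp: E_def intro: minus_carrier_mat)
  have "transpose_mat E * X = transpose_mat X * X * H * (transpose_mat X * X) - transpose_mat X * X"
    using X H H_sym by (simp add: E_def minus_mult_distrib_mat')
  then have EX: "transpose_mat E * X = 0\<^sub>m q q"
    using X H G by simp
  have "transpose_mat E * E = transpose_mat E * (X * (H * (transpose_mat X * X)) - X)"
    unfolding E_def[symmetric] ..
  also have "\<dots> = transpose_mat E * X * (H * (transpose_mat X * X)) - transpose_mat E * X"
    using X H E by (simp add: mult_minus_distrib_mat')
  also have "\<dots> = 0\<^sub>m q q"
    using EX X H by simp
  finally have "E = 0\<^sub>m n q"
    by (rule transpose_mult_self_eq_0[OF E])
  moreover have "X * (H * (transpose_mat X * X)) \<in> carrier_mat n q"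
    using X H by simp
  ultimately show ?thesis
    using eq_of_minus_eq_0_mat[OF _ X] unfolding E_def by blast
qed

lemma
  fixes X :: "real mat"
  assumes X: "X \<in> carrier_mat n q"
  shows proj_symmetric: "transpose_mat (proj X) = proj X"
    and proj_mult_self: "proj X * X = X"
    and proj_idempotent: "proj X * proj X = proj X"
proof -
  define H where "H = mp_inverse (transpose_mat X * X)"
  note H = mp_inverse_symmetric[of "transpose_mat X * X" q, folded H_def]
  have H: "H \<in> carrier_mat q q" "transpose_mat H = H"
    and G: "transpose_mat X * X * H * (transpose_mat X * X) = transpose_mat X * X"
    using H X by simp_all
  have proj_eq: "proj X = X * (H * transpose_mat X)"
    using X H by (simp add: proj_def H_def)
  show "transpose_mat (proj X) = proj X"
    using X H by (simp add: proj_eq)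
  show PX: "proj X * X = X"
    using mult_ginverse_gram[OF X H G] X H by (simp add: proj_eq)
  have "proj X * proj X = (proj X * X) * (H * transpose_mat X)"
    using X H by (simp add: proj_eq)
  then show "proj X * proj X = proj X"
    using PX by (simp add: proj_eq[symmetric])
qed

lemma trace_quadratic_form_antitone:
  fixes Q P Z :: "real mat"
  assumes Q: "Q \<in> carrier_mat n n" and P: "P \<in> carrier_mat n n" and Z: "Z \<in> carrier_mat n t"
    and Q_sym: "transpose_mat Q = Q" and Q_idem: "Q * Q = Q"
    and P_sym: "transpose_mat P = P" and P_idem: "P * P = P" and QP: "Q * P = P"
  shows "mtrace (transpose_mat Z * (1\<^sub>m n - Q) * Z) \<le> mtrace (transpose_mat Z * (1\<^sub>m n - P) * Z)"
proof -
  define D where "D = Q - P"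
  have D: "D \<in> carrier_mat n n"
    using Q P by (simp add: D_def minus_carrier_mat)
  have "P * Q = transpose_mat (Q * P)"
    using Q P Q_sym P_sym by simp
  then have PQ: "P * Q = P"
    using QP P_sym by simp
  have D_sym: "transpose_mat D = D"
    using Q P Q_sym P_sym by (simp add: D_def)
  have "D * D = Q * Q - P * Q - (Q * P - P * P)"
    using Q P by (simp add: D_def mat_distrib_simps)
  also have "\<dots> = D"
    using Q P by (simp add: Q_idem PQ QP P_idem D_def) (intro eq_matI; simp)
  finally have D_idem: "D * D = D" .
  have "transpose_mat (D * Z) * (D * Z) = transpose_mat Z * ((D * D) * Z)"
    using D Z D_sym by simp
  then have DZ: "transpose_mat Z * D * Z = transpose_mat (D * Z) * (D * Z)"
    using D Z by (simp add: D_idem)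
  have "1\<^sub>m n - P = (1\<^sub>m n - Q) + D"
    using Q P by (intro eq_matI) (auto simp: D_def)
  then have "transpose_mat Z * (1\<^sub>m n - P) * Z = transpose_mat Z * (1\<^sub>m n - Q) * Z + transpose_mat Z * D * Z"
    using Q D Z by (simp add: mat_distrib_simps)
  then have "mtrace (transpose_mat Z * (1\<^sub>m n - P) * Z)
      = mtrace (transpose_mat Z * (1\<^sub>m n - Q) * Z) + mtrace (transpose_mat Z * D * Z)"
    using Q D Z by (simp add: mtrace_add)
  moreover have "mtrace (transpose_mat Z * D * Z) \<ge> 0"
    unfolding DZ by (rule mtrace_transpose_mult_self_nonneg)
  ultimately show ?thesis
    by linarith
qed

lemma proj_hcat_mult_right:
  fixes Y B :: "real mat"
  assumes Y: "Y \<in> carrier_mat n p" and B: "B \<in> carrier_mat n r"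
  shows "proj (hcat Y B) * B = B"
proof (rule eq_matI)
  fix i j assume ij: "i < dim_row B" "j < dim_col B"
  note YB = hcat_carrier[OF Y B]
  have "col (hcat Y B) (p + j) = col B j"
    using Y B ij by (intro eq_vecI) (auto simp: index_hcat)
  then have "(proj (hcat Y B) * B) $$ (i, j) = (proj (hcat Y B) * hcat Y B) $$ (i, p + j)"
    using Y B ij proj_carrier[OF YB] by simp
  also have "\<dots> = B $$ (i, j)"
    using Y B ij by (simp add: proj_mult_self[OF YB] index_hcat)
  finally show "(proj (hcat Y B) * B) $$ (i, j) = B $$ (i, j)" .
qed (use B proj_carrier[OF hcat_carrier[OF Y B]] in auto)

lemma trace_proj_perp_hcat_le:
  fixes Z Y B :: "real mat"
  assumes Z: "Z \<in> carrier_mat n t" and Y: "Y \<in> carrier_mat n p" and B: "B \<in> carrier_mat n r"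
  shows "mtrace (transpose_mat Z * proj_perp (hcat Y B) * Z) \<le> mtrace (transpose_mat Z * proj_perp B * Z)"
proof -
  note YB = hcat_carrier[OF Y B]
  define Q where "Q = proj (hcat Y B)"
  define P where "P = proj B"
  define H where "H = mp_inverse (transpose_mat B * B)"
  have Q: "Q \<in> carrier_mat n n" and P: "P \<in> carrier_mat n n"
    using proj_carrier[OF YB] proj_carrier[OF B] by (simp_all add: Q_def P_def)
  have H: "H \<in> carrier_mat r r"
    using mp_inverse_symmetric(1)[of "transpose_mat B * B" r] B by (simp add: H_def)
  have "Q * P = (Q * B) * (H * transpose_mat B)"
    using Q B H by (simp add: P_def proj_def H_def)
  then have QP: "Q * P = P"
    using proj_hcat_mult_right[OF Y B] B H by (simp add: Q_def P_def proj_def H_def)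
  show ?thesis
    using trace_quadratic_form_antitone[OF Q P Z] QP proj_symmetric proj_idempotent YB Y B
    by (simp add: proj_perp_def Q_def P_def)
qed

lemma mp_inverse_smult_one:
  assumes "c \<noteq> 0"
  shows "mp_inverse (c \<cdot>\<^sub>m 1\<^sub>m n) = (1 / c) \<cdot>\<^sub>m 1\<^sub>m n"
  using assms by (intro mp_inverse_eqI[of _ n n]) auto

lemma proj_of_orthogonal_columns:
  fixes B :: "real mat"
  assumes B: "B \<in> carrier_mat n r" and BB: "transpose_mat B * B = c \<cdot>\<^sub>m 1\<^sub>m r" and c: "c \<noteq> 0"
  shows "proj B = (1 / c) \<cdot>\<^sub>m (B * transpose_mat B)"
  using B by (simp add: proj_def BB mp_inverse_smult_one[OF c])

section \<open>The information matrix of a circular design\<close>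

lemma sum_lessThan_mult_split:
  fixes f :: "nat \<Rightarrow> 'a :: comm_monoid_add"
  shows "(\<Sum>r<b * k. f r) = (\<Sum>i<b. \<Sum>j<k. f (i * k + j))"
proof -
  have "(\<Sum>r<b * k. f r) = (\<Sum>i<b. sum f {i * k..<i * k + k})"
    using sum.nat_group[of f k b] by (simp add: mult.commute)
  also have "\<dots> = (\<Sum>i<b. \<Sum>j<k. f (i * k + j))"
  proof (rule sum.cong[OF refl])
    fix i
    show "sum f {i * k..<i * k + k} = (\<Sum>j<k. f (i * k + j))"
      using sum.shift_bounds_nat_ivl[of f 0 "i * k" k] by (simp add: lessThan_atLeast0 add.commute)
  qed
  finally show ?thesis .
qed

lemma block_index_bound:
  assumes "i < b" "j < k"
  shows "i * k + j < b * (k :: nat)"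
proof -
  have "i * k + j < Suc i * k"
    using assms(2) by simp
  also have "\<dots> \<le> b * k"
    using assms(1) by (intro mult_le_mono1) simp
  finally show ?thesis .
qed

lemma K_mat_dims[simp]: "dim_row (K_mat m t) = m * t" "dim_col (K_mat m t) = t"
  by (simp_all add: K_mat_def)

lemma K_mat_carrier[simp]: "K_mat m t \<in> carrier_mat (m * t) t"
  by (simp add: carrier_matI)

lemma block_mat_dims[simp]: "dim_row (block_mat b k) = b * k" "dim_col (block_mat b k) = b"
  by (simp_all add: block_mat_def)

lemma block_mat_carrier[simp]: "block_mat b k \<in> carrier_mat (b * k) b"
  by (simp add: carrier_matI)

lemma index_mult_K_mat:
  fixes M :: "real mat"
  assumes "M \<in> carrier_mat n (m * t)" "r < n" "c < t"
  shows "(M * K_mat m t) $$ (r, c) = (\<Sum>q<m. M $$ (r, q * t + c))"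
proof -
  have "(M * K_mat m t) $$ (r, c) = (\<Sum>s<m * t. M $$ (r, s) * (if s mod t = c then 1 else 0))"
    using assms by (auto simp: K_mat_def scalar_prod_def lessThan_atLeast0 intro!: sum.cong)
  also have "\<dots> = (\<Sum>q<m. \<Sum>u<t. if u = c then M $$ (r, q * t + u) else 0)"
    unfolding sum_lessThan_mult_split by (intro sum.cong refl) auto
  finally show ?thesis
    using assms(3) by simp
qed

lemma K_mat_1: "K_mat 1 t = 1\<^sub>m t"
  by (rule eq_matI) (auto simp: K_mat_def)

lemma hcat_mult_K_mat:
  fixes X Y :: "real mat"
  assumes X: "X \<in> carrier_mat n (m * t)" and Y: "Y \<in> carrier_mat n t"
  shows "hcat X Y * K_mat (Suc m) t = X * K_mat m t + Y"
proof (rule eq_matI)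
  fix r c assume rc: "r < dim_row (X * K_mat m t + Y)" "c < dim_col (X * K_mat m t + Y)"
  have XY: "hcat X Y \<in> carrier_mat n (Suc m * t)"
    using hcat_carrier[OF X Y] by (simp add: add.commute)
  have "(hcat X Y * K_mat (Suc m) t) $$ (r, c) = (\<Sum>q<Suc m. hcat X Y $$ (r, q * t + c))"
    using rc Y by (intro index_mult_K_mat[OF XY]) auto
  also have "\<dots> = (\<Sum>q<m. hcat X Y $$ (r, q * t + c)) + hcat X Y $$ (r, m * t + c)"
    by simp
  also have "\<dots> = (\<Sum>q<m. X $$ (r, q * t + c)) + Y $$ (r, c)"
  proof -
    have "hcat X Y $$ (r, q * t + c) = X $$ (r, q * t + c)" if "q < m" for q
      using that rc X Y block_index_bound[of q m c t] by (simp add: index_hcat mult.commute)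
    then show ?thesis
      using rc X Y by (simp add: index_hcat)
  qed
  also have "\<dots> = (X * K_mat m t) $$ (r, c) + Y $$ (r, c)"
    using rc Y index_mult_K_mat[OF X, of r c] by simp
  finally show "(hcat X Y * K_mat (Suc m) t) $$ (r, c) = (X * K_mat m t + Y) $$ (r, c)"
    using rc Y by simp
qed (use X Y in auto)

lemma K_mat_transpose_mult: "transpose_mat (K_mat m t) * K_mat m t = real m \<cdot>\<^sub>m 1\<^sub>m t"
proof (rule eq_matI)
  fix i j assume "i < dim_row (real m \<cdot>\<^sub>m 1\<^sub>m t)" "j < dim_col (real m \<cdot>\<^sub>m 1\<^sub>m t)"
  then have ij: "i < t" "j < t" by auto
  have "(transpose_mat (K_mat m t) * K_mat m t) $$ (i, j) = (\<Sum>s<m * t. (if s mod t = i then 1 else 0) * (if s mod t = j then 1 else 0))"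
    using ij by (auto simp: K_mat_def scalar_prod_def lessThan_atLeast0 intro!: sum.cong)
  also have "\<dots> = (\<Sum>q<m. \<Sum>u<t. if u = i \<and> i = j then 1 else 0)"
    unfolding sum_lessThan_mult_split by (intro sum.cong refl) auto
  finally show "(transpose_mat (K_mat m t) * K_mat m t) $$ (i, j) = (real m \<cdot>\<^sub>m 1\<^sub>m t) $$ (i, j)"
    using ij by simp
qed (auto simp: K_mat_def)

lemma block_mat_transpose_mult: "transpose_mat (block_mat b k) * block_mat b k = real k \<cdot>\<^sub>m 1\<^sub>m b"
proof (rule eq_matI)
  fix i j assume "i < dim_row (real k \<cdot>\<^sub>m 1\<^sub>m b)" "j < dim_col (real k \<cdot>\<^sub>m 1\<^sub>m b)"
  then have ij: "i < b" "j < b" by auto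
  have "(transpose_mat (block_mat b k) * block_mat b k) $$ (i, j)
      = (\<Sum>r<b * k. (if r div k = i then 1 else 0) * (if r div k = j then 1 else 0))"
    using ij by (auto simp: block_mat_def scalar_prod_def lessThan_atLeast0 intro!: sum.cong)
  also have "\<dots> = (\<Sum>q<b. \<Sum>u<k. if q = i \<and> i = j then 1 else 0)"
    unfolding sum_lessThan_mult_split by (intro sum.cong refl) auto
  also have "\<dots> = (\<Sum>q<b. if q = i then (if i = j then real k else 0) else 0)"
    by (intro sum.cong refl) auto
  finally show "(transpose_mat (block_mat b k) * block_mat b k) $$ (i, j) = (real k \<cdot>\<^sub>m 1\<^sub>m b) $$ (i, j)"
    using ij by simp
qed (auto simp: block_mat_def)

lemma trace_info_mat_le:
  fixes A B :: "real mat"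
  assumes A: "A \<in> carrier_mat n (m * t)" and B: "B \<in> carrier_mat n r" and m: "0 < m"
  defines "Z \<equiv> (1 / real m) \<cdot>\<^sub>m (A * K_mat m t)"
  shows "mtrace (info_mat A B (K_mat m t)) \<le> mtrace (transpose_mat Z * proj_perp B * Z)"
proof -
  define M where "M = 1\<^sub>m (m * t) - K_mat m t * ((1 / real m) \<cdot>\<^sub>m 1\<^sub>m t) * transpose_mat (K_mat m t)"
  have M: "M \<in> carrier_mat (m * t) (m * t)"
    by (intro carrier_matI) (simp_all add: M_def)
  have Z: "Z \<in> carrier_mat n t"
    using A by (simp add: Z_def)
  have "info_mat A B (K_mat m t) = transpose_mat Z * proj_perp (hcat (A * M) B) * Z"
    using A m by (simp add: info_mat_def Let_def K_mat_transpose_mult mp_inverse_smult_one Z_def M_def)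
  then show ?thesis
    using trace_proj_perp_hcat_le[OF Z mult_carrier_mat[OF A M] B] by simp
qed

lemma trace_proj_perp_block_mat:
  fixes Z :: "real mat"
  assumes Z: "Z \<in> carrier_mat (b * k) t" and k: "0 < k"
  shows "mtrace (transpose_mat Z * proj_perp (block_mat b k) * Z)
    = (\<Sum>i<b. \<Sum>c<t. (\<Sum>j<k. (Z $$ (i * k + j, c))\<^sup>2) - (\<Sum>j<k. Z $$ (i * k + j, c))\<^sup>2 / k)"
proof -
  define B where "B = block_mat b k"
  define W where "W = transpose_mat B * Z"
  have B: "B \<in> carrier_mat (b * k) b" and W: "W \<in> carrier_mat b t"
    using Z by (auto simp: B_def W_def intro!: carrier_matI)
  have W_index: "W $$ (i, c) = (\<Sum>j<k. Z $$ (i * k + j, c))" if "i < b" "c < t" for i c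
  proof -
    have "W $$ (i, c) = (\<Sum>r<b * k. (if r div k = i then Z $$ (r, c) else 0))"
      using that Z by (auto simp: W_def B_def block_mat_def scalar_prod_def lessThan_atLeast0 intro!: sum.cong)
    also have "\<dots> = (\<Sum>i'<b. if i' = i then \<Sum>j<k. Z $$ (i' * k + j, c) else 0)"
      unfolding sum_lessThan_mult_split by (intro sum.cong refl) auto
    finally show ?thesis
      using that by simp
  qed
  have "proj B = (1 / real k) \<cdot>\<^sub>m (B * transpose_mat B)"
    by (rule proj_of_orthogonal_columns[OF B]) (use k in \<open>simp_all add: B_def block_mat_transpose_mult\<close>)
  then have "proj_perp B = 1\<^sub>m (b * k) - (1 / real k) \<cdot>\<^sub>m (B * transpose_mat B)"
    using B by (simp add: proj_perp_def)
  then have "transpose_mat Z * proj_perp B * Z = transpose_mat Z * Z - (1 / real k) \<cdot>\<^sub>m (transpose_mat W * W)"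
    using Z B by (simp add: W_def mat_distrib_simps)
  then have "mtrace (transpose_mat Z * proj_perp B * Z)
      = mtrace (transpose_mat Z * Z) - mtrace (transpose_mat W * W) / k"
    using Z W by (simp add: mtrace_minus mtrace_smult)
  also have "mtrace (transpose_mat Z * Z) = (\<Sum>i<b. \<Sum>c<t. \<Sum>j<k. (Z $$ (i * k + j, c))\<^sup>2)"
    using Z by (simp add: mtrace_transpose_mult_self sum_lessThan_mult_split sum.swap[of _ "{..<t}"])
  also have "mtrace (transpose_mat W * W) = (\<Sum>i<b. \<Sum>c<t. (\<Sum>j<k. Z $$ (i * k + j, c))\<^sup>2)"
    using W by (simp add: mtrace_transpose_mult_self W_index sum.swap[of _ "{..<t}"])
  finally show ?thesis
    by (simp add: B_def sum_subtractf sum_divide_distrib)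
qed

section \<open>Within-block sums of squares of a sequence\<close>

definition cyc_prev :: "nat \<Rightarrow> nat \<Rightarrow> nat" where
  "cyc_prev k j = (j + k - 1) mod k"

definition cyc_next :: "nat \<Rightarrow> nat \<Rightarrow> nat" where
  "cyc_next k j = (j + 1) mod k"

lemma cyc_prev_next: "j < k \<Longrightarrow> cyc_prev k (cyc_next k j) = j"
  by (cases "Suc j = k") (auto simp: cyc_prev_def cyc_next_def)

lemma cyc_next_prev: "j < k \<Longrightarrow> cyc_next k (cyc_prev k j) = j"
  by (cases "j = 0") (auto simp: cyc_prev_def cyc_next_def mod_Suc_eq)

lemma bij_betw_cyc_next: "0 < k \<Longrightarrow> bij_betw (cyc_next k) {..<k} {..<k}"
  by (intro bij_betw_byWitness[where f' = "cyc_prev k"])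
    (auto simp: cyc_prev_next cyc_next_prev, auto simp: cyc_prev_def cyc_next_def)

lemma bij_betw_cyc_prev: "0 < k \<Longrightarrow> bij_betw (cyc_prev k) {..<k} {..<k}"
  by (intro bij_betw_byWitness[where f' = "cyc_next k"])
    (auto simp: cyc_prev_next cyc_next_prev, auto simp: cyc_prev_def cyc_next_def)

lemma card_lessThan_filter: "real (card {j. j < k \<and> P j}) = (\<Sum>j<k. of_bool (P j))" for k :: nat
  by (subst sum_of_bool_eq) (auto intro: arg_cong[where f = card])

lemma seq_n_eq_sum: "real (seq_n l c) = (\<Sum>j<length l. of_bool (l ! j = c))"
  by (simp add: seq_n_def card_lessThan_filter)

lemma sum_card_common_value:
  fixes f g :: "nat \<Rightarrow> nat"
  assumes "\<And>j. j < k \<Longrightarrow> f j < t"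
  shows "(\<Sum>i<t. real (card {j. j < k \<and> f j = i \<and> g j = i})) = (\<Sum>j<k. of_bool (f j = g j))"
proof -
  have "(\<Sum>i<t. real (card {j. j < k \<and> f j = i \<and> g j = i})) = (\<Sum>i<t. \<Sum>j<k. of_bool (f j = i \<and> g j = i))"
    by (simp only: card_lessThan_filter)
  also have "\<dots> = (\<Sum>j<k. \<Sum>i<t. of_bool (f j = i \<and> g j = i))"
    by (rule sum.swap)
  also have "\<dots> = (\<Sum>j<k. \<Sum>i<t. if f j = i then of_bool (f j = g j) else 0)"
    by (intro sum.cong refl) auto
  also have "\<dots> = (\<Sum>j<k. of_bool (f j = g j))"
    using assms by (intro sum.cong refl) simp
  finally show ?thesis .
qed

lemma is_seq_nth_less: "is_seq t k l \<Longrightarrow> j < k \<Longrightarrow> l ! j < t"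
  unfolding is_seq_def using nth_mem by blast

lemma length_is_seq: "is_seq t k l \<Longrightarrow> length l = k"
  by (simp add: is_seq_def)

lemma sum_seq_m:
  assumes l: "is_seq t k l" and k: "0 < k"
  shows "(\<Sum>i<t. real (seq_m l i)) = (\<Sum>j<k. of_bool (l ! cyc_prev k j = l ! j))"
  unfolding seq_m_def cyc_prev_def length_is_seq[OF l]
  by (rule sum_card_common_value) (use l k in \<open>simp add: is_seq_nth_less\<close>)

lemma sum_seq_m_next:
  assumes l: "is_seq t k l" and k: "0 < k"
  shows "(\<Sum>i<t. real (seq_m l i)) = (\<Sum>j<k. of_bool (l ! j = l ! cyc_next k j))"
proof -
  have "(\<Sum>j<k. of_bool (l ! j = l ! cyc_next k j))
      = (\<Sum>j<k. of_bool (l ! cyc_prev k (cyc_next k j) = l ! cyc_next k j) :: real)"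
    by (intro sum.cong refl) (simp add: cyc_prev_next)
  also have "\<dots> = (\<Sum>j<k. of_bool (l ! cyc_prev k j = l ! j))"
    by (rule sum.reindex_bij_betw[OF bij_betw_cyc_next[OF k]])
  finally show ?thesis
    using sum_seq_m[OF l k] by simp
qed

lemma sum_seq_p:
  assumes l: "is_seq t k l" and k: "0 < k"
  shows "(\<Sum>i<t. real (seq_p l i)) = (\<Sum>j<k. of_bool (l ! cyc_prev k j = l ! cyc_next k j))"
  unfolding seq_p_def cyc_prev_def cyc_next_def length_is_seq[OF l]
  by (rule sum_card_common_value) (use l k in \<open>simp add: is_seq_nth_less\<close>)

context
begin

declare sum_of_bool_eq [simp del]

(* The row of plot j of X1 = A K (K'K)^+ for a block with treatment sequence l: the mean of the
   indicator vectors of the treatments on the plots \<sigma> 0 j, ..., \<sigma> (m - 1) j. *)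
definition neighbour_mean :: "nat \<Rightarrow> (nat \<Rightarrow> nat \<Rightarrow> nat) \<Rightarrow> nat list \<Rightarrow> nat \<Rightarrow> nat \<Rightarrow> real" where
  "neighbour_mean m \<sigma> l j c = (\<Sum>s<m. of_bool (l ! \<sigma> s j = c)) / real m"

definition block_ss :: "nat \<Rightarrow> nat \<Rightarrow> (nat \<Rightarrow> nat \<Rightarrow> nat) \<Rightarrow> nat list \<Rightarrow> real" where
  "block_ss t m \<sigma> l = (\<Sum>c<t. (\<Sum>j<length l. (neighbour_mean m \<sigma> l j c)\<^sup>2)
      - (\<Sum>j<length l. neighbour_mean m \<sigma> l j c)\<^sup>2 / length l)"

lemma sum_sq_sum_indicators:
  fixes a :: "nat \<Rightarrow> nat"
  assumes "\<And>s. s < m \<Longrightarrow> a s < t"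
  shows "(\<Sum>c<t. (\<Sum>s<m. of_bool (a s = c))\<^sup>2) = (\<Sum>s<m. \<Sum>s'<m. of_bool (a s = a s') :: real)"
proof -
  have "(\<Sum>c<t. (\<Sum>s<m. of_bool (a s = c))\<^sup>2) = (\<Sum>c<t. \<Sum>s<m. \<Sum>s'<m. of_bool (a s = c) * of_bool (a s' = c) :: real)"
    by (simp add: power2_eq_square sum_product)
  also have "\<dots> = (\<Sum>s<m. \<Sum>s'<m. \<Sum>c<t. if a s = c then of_bool (a s = a s') else 0)"
    by (subst sum.swap, subst (2) sum.swap) (intro sum.cong refl, auto)
  also have "\<dots> = (\<Sum>s<m. \<Sum>s'<m. of_bool (a s = a s'))"
    using assms by (intro sum.cong refl) (subst sum.delta'; simp)
  finally show ?thesis .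
qed

lemma sum_neighbour_mean:
  assumes l: "length l = k" and m: "0 < m" and \<sigma>: "\<And>s. s < m \<Longrightarrow> bij_betw (\<sigma> s) {..<k} {..<k}"
  shows "(\<Sum>j<k. neighbour_mean m \<sigma> l j c) = real (seq_n l c)"
proof -
  have "(\<Sum>j<k. of_bool (l ! \<sigma> s j = c)) = real (seq_n l c)" if "s < m" for s
    using sum.reindex_bij_betw[OF \<sigma>[OF that], of "\<lambda>j. of_bool (l ! j = c)"]
    unfolding seq_n_eq_sum l by (simp only:)
  then have "(\<Sum>s<m. \<Sum>j<k. of_bool (l ! \<sigma> s j = c)) = (\<Sum>s<m. real (seq_n l c))"
    by (intro sum.cong) simp_all
  moreover have "(\<Sum>j<k. neighbour_mean m \<sigma> l j c) = (\<Sum>s<m. \<Sum>j<k. of_bool (l ! \<sigma> s j = c)) / real m"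
    unfolding neighbour_mean_def sum_divide_distrib[symmetric] by (rule arg_cong[OF sum.swap])
  ultimately show ?thesis
    using m by simp
qed

lemma block_ss_eq:
  assumes l: "is_seq t k l" and k: "0 < k" and m: "0 < m"
    and \<sigma>: "\<And>s. s < m \<Longrightarrow> bij_betw (\<sigma> s) {..<k} {..<k}"
  shows "block_ss t m \<sigma> l = (\<Sum>j<k. \<Sum>s<m. \<Sum>s'<m. of_bool (l ! \<sigma> s j = l ! \<sigma> s' j)) / (real m)\<^sup>2
      - (\<Sum>c<t. (real (seq_n l c))\<^sup>2) / k"
proof -
  note lk = length_is_seq[OF l]
  have "l ! \<sigma> s j < t" if "s < m" "j < k" for s j
    using is_seq_nth_less[OF l] bij_betwE[OF \<sigma>[OF that(1)]] that(2) by blast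
  then have "(\<Sum>c<t. (neighbour_mean m \<sigma> l j c)\<^sup>2)
      = (\<Sum>s<m. \<Sum>s'<m. of_bool (l ! \<sigma> s j = l ! \<sigma> s' j)) / (real m)\<^sup>2" if "j < k" for j
    using sum_sq_sum_indicators[of m "\<lambda>s. l ! \<sigma> s j" t] that
    by (simp add: neighbour_mean_def power_divide sum_divide_distrib[symmetric])
  then have "(\<Sum>c<t. \<Sum>j<k. (neighbour_mean m \<sigma> l j c)\<^sup>2)
      = (\<Sum>j<k. \<Sum>s<m. \<Sum>s'<m. of_bool (l ! \<sigma> s j = l ! \<sigma> s' j)) / (real m)\<^sup>2"
    by (subst sum.swap) (simp add: sum_divide_distrib)
  then show ?thesis
    by (simp add: block_ss_def lk sum_neighbour_mean[OF lk m \<sigma>] sum_subtractf sum_divide_distrib)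
qed

lemma sum_lessThan_2: "(\<Sum>s<2 :: nat. f s) = f 0 + (f 1 :: 'a :: comm_monoid_add)"
  by (simp add: numeral_2_eq_2)

lemma sum_lessThan_3: "(\<Sum>s<3 :: nat. f s) = f 0 + f 1 + (f 2 :: 'a :: comm_monoid_add)"
  by (simp add: numeral_3_eq_3 numeral_2_eq_2 add.assoc)

lemma c_fun_eq_block_ss:
  assumes l: "is_seq t k l" and k: "0 < k"
  shows "c_fun t l = block_ss t 2 ((!) [id, cyc_prev k]) l"
proof -
  have \<sigma>: "bij_betw ([id, cyc_prev k] ! s) {..<k} {..<k}" if "s < 2" for s
    using that bij_betw_cyc_prev[OF k] by (auto simp: less_2_cases_iff)
  have pairs: "(\<Sum>s<2. \<Sum>s'<2. of_bool (l ! ([id, cyc_prev k] ! s) j = l ! ([id, cyc_prev k] ! s') j))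
      = 2 + 2 * (of_bool (l ! cyc_prev k j = l ! j) :: real)" for j
    by (simp add: sum_lessThan_2 eq_commute[of "l ! j" "l ! cyc_prev k j"])
  have "block_ss t 2 ((!) [id, cyc_prev k]) l
      = (\<Sum>j<k. 2 + 2 * of_bool (l ! cyc_prev k j = l ! j)) / 4 - (\<Sum>c<t. (real (seq_n l c))\<^sup>2) / k"
    using block_ss_eq[OF l k _ \<sigma>] by (simp add: pairs)
  then show ?thesis
    using k by (simp add: c_fun_def Let_def length_is_seq[OF l] sum_seq_m[OF l k] sum.distrib
        sum_distrib_left[symmetric] field_simps)
qed

lemma ctilde_fun_eq_block_ss:
  assumes l: "is_seq t k l" and k: "0 < k"
  shows "ctilde_fun t l = block_ss t 3 ((!) [id, cyc_prev k, cyc_next k]) l"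
proof -
  have \<sigma>: "bij_betw ([id, cyc_prev k, cyc_next k] ! s) {..<k} {..<k}" if "s < 3" for s
    using that bij_betw_cyc_prev[OF k] bij_betw_cyc_next[OF k] by (auto simp: numeral_3_eq_3 less_Suc_eq)
  have pairs: "(\<Sum>s<3. \<Sum>s'<3. of_bool (l ! ([id, cyc_prev k, cyc_next k] ! s) j
        = l ! ([id, cyc_prev k, cyc_next k] ! s') j))
      = 3 + 2 * of_bool (l ! cyc_prev k j = l ! j) + 2 * of_bool (l ! j = l ! cyc_next k j)
        + 2 * (of_bool (l ! cyc_prev k j = l ! cyc_next k j) :: real)" for j
    by (simp add: sum_lessThan_3 eq_commute[of "l ! j" "l ! cyc_prev k j"]
        eq_commute[of "l ! cyc_next k j" "l ! j"] eq_commute[of "l ! cyc_next k j" "l ! cyc_prev k j"])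
  have "block_ss t 3 ((!) [id, cyc_prev k, cyc_next k]) l
      = (\<Sum>j<k. 3 + 2 * of_bool (l ! cyc_prev k j = l ! j) + 2 * of_bool (l ! j = l ! cyc_next k j)
          + 2 * of_bool (l ! cyc_prev k j = l ! cyc_next k j)) / 9 - (\<Sum>c<t. (real (seq_n l c))\<^sup>2) / k"
    using block_ss_eq[OF l k _ \<sigma>] by (simp add: pairs)
  then show ?thesis
    using k by (simp add: ctilde_fun_def Let_def length_is_seq[OF l] sum_seq_m[OF l k] sum_seq_p[OF l k]
        sum_seq_m_next[OF l k, symmetric] sum.distrib sum_distrib_left[symmetric] field_simps)
qed

end

definition block_seq :: "nat \<Rightarrow> (nat \<Rightarrow> nat \<Rightarrow> nat) \<Rightarrow> nat \<Rightarrow> nat list" where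
  "block_seq k d i = map (d i) [0..<k]"

lemma block_seq_is_seq: "is_design t b k d \<Longrightarrow> i < b \<Longrightarrow> is_seq t k (block_seq k d i)"
  by (auto simp: is_seq_def is_design_def block_seq_def)

lemma nth_block_seq: "j < k \<Longrightarrow> block_seq k d i ! j = d i j"
  by (simp add: block_seq_def)

lemma T_L_R_mat_dims[simp]:
  "dim_row (T_mat t b k d) = b * k" "dim_col (T_mat t b k d) = t"
  "dim_row (L_mat t b k d) = b * k" "dim_col (L_mat t b k d) = t"
  "dim_row (R_mat t b k d) = b * k" "dim_col (R_mat t b k d) = t"
  by (simp_all add: T_mat_def L_mat_def R_mat_def)

lemma T_L_R_mat_carrier[simp]:
  "T_mat t b k d \<in> carrier_mat (b * k) t" "L_mat t b k d \<in> carrier_mat (b * k) t"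
  "R_mat t b k d \<in> carrier_mat (b * k) t"
  by (simp_all add: carrier_matI)

lemma
  assumes "i < b" "j < k" "c < t"
  shows index_T_mat: "T_mat t b k d $$ (i * k + j, c) = of_bool (d i j = c)"
    and index_L_mat: "L_mat t b k d $$ (i * k + j, c) = of_bool (d i (cyc_prev k j) = c)"
    and index_R_mat: "R_mat t b k d $$ (i * k + j, c) = of_bool (d i (cyc_next k j) = c)"
  using assms block_index_bound[OF assms(1,2)]
  by (simp_all add: T_mat_def L_mat_def R_mat_def cyc_prev_def cyc_next_def)

lemma T_L_mult_K_mat: "hcat (T_mat t b k d) (L_mat t b k d) * K_mat 2 t = T_mat t b k d + L_mat t b k d"
  using hcat_mult_K_mat[of "T_mat t b k d" "b * k" 1 t "L_mat t b k d"]
  by (simp add: K_mat_1[unfolded One_nat_def] numeral_2_eq_2)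

lemma T_L_R_mult_K_mat:
  "hcat (hcat (T_mat t b k d) (L_mat t b k d)) (R_mat t b k d) * K_mat 3 t
    = T_mat t b k d + L_mat t b k d + R_mat t b k d"
  using hcat_mult_K_mat[of "hcat (T_mat t b k d) (L_mat t b k d)" "b * k" 2 t "R_mat t b k d"]
  by (simp add: T_L_mult_K_mat numeral_3_eq_3 carrier_matI)

lemma trace_info_mat_le_sum_block_ss:
  fixes A :: "real mat"
  assumes k: "0 < k" and m: "0 < m" and \<sigma>: "\<And>s. s < m \<Longrightarrow> bij_betw (\<sigma> s) {..<k} {..<k}"
    and A: "A \<in> carrier_mat (b * k) (m * t)"
    and AK: "\<And>i j c. i < b \<Longrightarrow> j < k \<Longrightarrow> c < t \<Longrightarrow>
      (A * K_mat m t) $$ (i * k + j, c) = (\<Sum>s<m. of_bool (d i (\<sigma> s j) = c))"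
  shows "mtrace (info_mat A (block_mat b k) (K_mat m t)) \<le> (\<Sum>i<b. block_ss t m \<sigma> (block_seq k d i))"
proof -
  define Z where "Z = (1 / real m) \<cdot>\<^sub>m (A * K_mat m t)"
  have Z: "Z \<in> carrier_mat (b * k) t"
    using A by (simp add: Z_def)
  have Z_index: "Z $$ (i * k + j, c) = neighbour_mean m \<sigma> (block_seq k d i) j c"
    if "i < b" "j < k" "c < t" for i j c
    using that AK[OF that] A block_index_bound[OF that(1,2)] bij_betwE[OF \<sigma>]
    by (simp add: Z_def neighbour_mean_def nth_block_seq)
  have "mtrace (info_mat A (block_mat b k) (K_mat m t)) \<le> mtrace (transpose_mat Z * proj_perp (block_mat b k) * Z)"
    using trace_info_mat_le[OF A block_mat_carrier m] by (simp add: Z_def)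
  also have "\<dots> = (\<Sum>i<b. \<Sum>c<t. (\<Sum>j<k. (Z $$ (i * k + j, c))\<^sup>2) - (\<Sum>j<k. Z $$ (i * k + j, c))\<^sup>2 / k)"
    by (rule trace_proj_perp_block_mat[OF Z k])
  also have "\<dots> = (\<Sum>i<b. block_ss t m \<sigma> (block_seq k d i))"
    by (intro sum.cong refl) (simp add: block_ss_def Z_index block_seq_def)
  finally show ?thesis .
qed

lemma trace_C_phi_le:
  assumes design: "is_design t b k d" and k: "0 < k"
  shows "mtrace (C_phi t b k d) \<le> (\<Sum>i<b. c_fun t (block_seq k d i))"
proof -
  have "mtrace (C_phi t b k d) \<le> (\<Sum>i<b. block_ss t 2 ((!) [id, cyc_prev k]) (block_seq k d i))"
    unfolding C_phi_def
    using T_L_mult_K_mat bij_betw_cyc_prev[OF k]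
    by (intro trace_info_mat_le_sum_block_ss[OF k])
      (auto simp: less_2_cases_iff sum_lessThan_2 index_T_mat index_L_mat block_index_bound intro: hcat_carrier)
  also have "\<dots> = (\<Sum>i<b. c_fun t (block_seq k d i))"
    using block_seq_is_seq[OF design] by (intro sum.cong refl) (simp add: c_fun_eq_block_ss[OF _ k])
  finally show ?thesis .
qed

lemma trace_C_psi_le:
  assumes design: "is_design t b k d" and k: "0 < k"
  shows "mtrace (C_psi t b k d) \<le> (\<Sum>i<b. ctilde_fun t (block_seq k d i))"
proof -
  have "mtrace (C_psi t b k d) \<le> (\<Sum>i<b. block_ss t 3 ((!) [id, cyc_prev k, cyc_next k]) (block_seq k d i))"
    unfolding C_psi_def
    using T_L_R_mult_K_mat bij_betw_cyc_prev[OF k] bij_betw_cyc_next[OF k]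
    by (intro trace_info_mat_le_sum_block_ss[OF k])
      (auto simp: numeral_3_eq_3 less_Suc_eq sum_lessThan_3 index_T_mat index_L_mat index_R_mat
        block_index_bound intro: hcat_carrier)
  also have "\<dots> = (\<Sum>i<b. ctilde_fun t (block_seq k d i))"
    using block_seq_is_seq[OF design] by (intro sum.cong refl) (simp add: ctilde_fun_eq_block_ss[OF _ k])
  finally show ?thesis .
qed

theorem proposition8:
  fixes t b k :: nat and d :: "nat \<Rightarrow> nat \<Rightarrow> nat" and l1 l2 :: "nat list"
  assumes "0 < t" and "0 < b" and "0 < k"
    and "is_design t b k d"
  shows "(is_seq t k l1 \<and> (\<forall>l. is_seq t k l \<longrightarrow> c_fun t l \<le> c_fun t l1)
            \<longrightarrow> mtrace (C_phi t b k d) \<le> real b * c_fun t l1)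
       \<and> (is_seq t k l2 \<and> (\<forall>l. is_seq t k l \<longrightarrow> ctilde_fun t l \<le> ctilde_fun t l2)
            \<longrightarrow> mtrace (C_psi t b k d) \<le> real b * ctilde_fun t l2)"
proof (intro conjI impI)
  assume "is_seq t k l1 \<and> (\<forall>l. is_seq t k l \<longrightarrow> c_fun t l \<le> c_fun t l1)"
  then have "(\<Sum>i<b. c_fun t (block_seq k d i)) \<le> of_nat (card {..<b}) * c_fun t l1"
    using block_seq_is_seq[OF assms(4)] by (intro sum_bounded_above) blast
  then show "mtrace (C_phi t b k d) \<le> real b * c_fun t l1"
    using trace_C_phi_le[OF assms(4,3)] by simp
next
  assume "is_seq t k l2 \<and> (\<forall>l. is_seq t k l \<longrightarrow> ctilde_fun t l \<le> ctilde_fun t l2)"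
  then have "(\<Sum>i<b. ctilde_fun t (block_seq k d i)) \<le> of_nat (card {..<b}) * ctilde_fun t l2"
    using block_seq_is_seq[OF assms(4)] by (intro sum_bounded_above) blast
  then show "mtrace (C_psi t b k d) \<le> real b * ctilde_fun t l2"
    using trace_C_psi_le[OF assms(4,3)] by simp
qed

end
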